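(* Let $X$ be a finite set of proposals with $|X|\geq 3$. No divisiveness selection function $\Delta$ on $X$ satisfies both Pareto Efficiency and Weak Position Unanimity.
   Context: $X!$ is the set of strict linear orders on $X$; a profile is a function $R:N\to X!$ with $N\subset\mathbb{N}$ finite and nonempty. A divisiveness selection function (DSF) maps every profile to a nonempty subset of $X$. A proposal $x$ occurs in the same position throughout $R$ if the number of proposals ranked above $x$ is the same in every agent's ranking. A proposal $x$ is Pareto-dominated in $R$ if there is a proposal $y$ that every agent in $N$ ranks above $x$. Pareto Efficiency: $x\notin\Delta(R)$ for every profile $R$ and every Pareto-dominated proposal $x$ in $R$. Weak Position Unanimity: for every profile $R$ and every proposal $x$ occurring in the same position throughout $R$, either $x\notin\Delta(R)$ or $\Delta(R)=X$. *)

theory Defs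
  imports Main
begin

text \<open>Convention: for a ranking r, (a, b) \<in> r means that a is ranked above b.\<close>

definition strict_lin_orders :: "'a set \<Rightarrow> 'a rel set" where
  "strict_lin_orders X = {r. r \<subseteq> X \<times> X \<and> strict_linear_order_on X r}"

definition profiles :: "'a set \<Rightarrow> (nat set \<times> (nat \<Rightarrow> 'a rel)) set" where
  "profiles X = {(N, R). finite N \<and> N \<noteq> {} \<and> (\<forall>i\<in>N. R i \<in> strict_lin_orders X)
                        \<and> (\<forall>i. i \<notin> N \<longrightarrow> R i = {})}"

definition is_DSF :: "'a set \<Rightarrow> (nat set \<times> (nat \<Rightarrow> 'a rel) \<Rightarrow> 'a set) \<Rightarrow> bool" where
  "is_DSF X D \<longleftrightarrow> (\<forall>P\<in>profiles X. D P \<noteq> {} \<and> D P \<subseteq> X)"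

definition same_position :: "nat set \<times> (nat \<Rightarrow> 'a rel) \<Rightarrow> 'a \<Rightarrow> bool" where
  "same_position P x \<longleftrightarrow>
     (\<exists>k. \<forall>i\<in>fst P. card {y. (y, x) \<in> snd P i} = k)"

definition pareto_dominated :: "nat set \<times> (nat \<Rightarrow> 'a rel) \<Rightarrow> 'a \<Rightarrow> bool" where
  "pareto_dominated P x \<longleftrightarrow> (\<exists>y. \<forall>i\<in>fst P. (y, x) \<in> snd P i)"

definition pareto_efficiency :: "'a set \<Rightarrow> (nat set \<times> (nat \<Rightarrow> 'a rel) \<Rightarrow> 'a set) \<Rightarrow> bool" where
  "pareto_efficiency X D \<longleftrightarrow>
     (\<forall>P\<in>profiles X. \<forall>x\<in>X. pareto_dominated P x \<longrightarrow> x \<notin> D P)"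

definition weak_position_unanimity :: "'a set \<Rightarrow> (nat set \<times> (nat \<Rightarrow> 'a rel) \<Rightarrow> 'a set) \<Rightarrow> bool" where
  "weak_position_unanimity X D \<longleftrightarrow>
     (\<forall>P\<in>profiles X. \<forall>x\<in>X. same_position P x \<longrightarrow> x \<notin> D P \<or> D P = X)"

end

theory Submission
  imports Defs
begin

text \<open>With a single agent every proposal occurs in the same position, so Weak Position
  Unanimity forces \<open>\<Delta>(R) = X\<close> on every single-agent profile. But as soon as \<open>|X| \<ge> 2\<close>,
  the proposals below the agent's top are Pareto-dominated and must be excluded by
  Pareto Efficiency.\<close>

definition single_agent_profile :: "'a rel \<Rightarrow> nat set \<times> (nat \<Rightarrow> 'a rel)" where
  "single_agent_profile r = ({0}, \<lambda>i. if i = 0 then r else {})"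

lemma finite_imp_strict_lin_order:
  assumes "finite X"
  obtains r where "r \<in> strict_lin_orders X"
proof -
  obtain f :: "'a \<Rightarrow> nat" and n where inj: "inj_on f X"
    using finite_imp_inj_to_nat_seg[OF assms] by blast
  define r where "r = {(a, b). a \<in> X \<and> b \<in> X \<and> f a < f b}"
  have "r \<in> strict_lin_orders X"
    unfolding strict_lin_orders_def strict_linear_order_on_def r_def
    using inj by (auto simp: trans_def irrefl_def total_on_def inj_on_def) (metis linorder_neqE_nat)
  then show thesis by (rule that)
qed

lemma strict_lin_order_has_dominated:
  assumes r: "r \<in> strict_lin_orders X" and "finite X" and "2 \<le> card X"
  obtains x y where "x \<in> X" and "(y, x) \<in> r"
proof -
  have "\<not> card X \<le> Suc 0"
    using assms(3) by simp
  then obtain a b where ab: "a \<in> X" "b \<in> X" "a \<noteq> b"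
    using card_le_Suc0_iff_eq[OF assms(2)] by blast
  with r have "(a, b) \<in> r \<or> (b, a) \<in> r"
    unfolding strict_lin_orders_def strict_linear_order_on_def total_on_def by blast
  with ab show thesis using that by blast
qed

lemma single_agent_profile_in_profiles:
  "r \<in> strict_lin_orders X \<Longrightarrow> single_agent_profile r \<in> profiles X"
  unfolding profiles_def single_agent_profile_def by auto

lemma same_position_single_agent_profile: "same_position (single_agent_profile r) x"
  unfolding same_position_def single_agent_profile_def by auto

lemma pareto_dominated_single_agent_profile:
  "(y, x) \<in> r \<Longrightarrow> pareto_dominated (single_agent_profile r) x"
  unfolding pareto_dominated_def single_agent_profile_def by auto

lemma weak_position_unanimity_single_agent_profile:
  assumes "is_DSF X D" and "weak_position_unanimity X D" and "r \<in> strict_lin_orders X"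
  shows "D (single_agent_profile r) = X"
proof -
  let ?P = "single_agent_profile r"
  have P: "?P \<in> profiles X"
    using assms(3) by (rule single_agent_profile_in_profiles)
  then obtain z where "z \<in> D ?P" and "z \<in> X"
    using assms(1) unfolding is_DSF_def by blast
  moreover have "same_position ?P z"
    by (rule same_position_single_agent_profile)
  ultimately show ?thesis
    using assms(2) P unfolding weak_position_unanimity_def by (meson bspec)
qed

lemma no_pareto_efficient_weakly_position_unanimous_DSF:
  assumes "finite X" and "2 \<le> card X"
    and dsf: "is_DSF X D" and pe: "pareto_efficiency X D" and wpu: "weak_position_unanimity X D"
  shows False
proof -
  obtain r where r: "r \<in> strict_lin_orders X"
    using assms(1) by (rule finite_imp_strict_lin_order)
  obtain x y where x: "x \<in> X" and yx: "(y, x) \<in> r"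
    using strict_lin_order_has_dominated[OF r assms(1,2)] .
  have "x \<notin> D (single_agent_profile r)"
    using pe single_agent_profile_in_profiles[OF r] x pareto_dominated_single_agent_profile[OF yx]
    unfolding pareto_efficiency_def by blast
  moreover have "D (single_agent_profile r) = X"
    using weak_position_unanimity_single_agent_profile[OF dsf wpu r] .
  ultimately show False
    using x by blast
qed

theorem theorem1:
  fixes X :: "'a set"
  assumes "finite X" and "card X \<ge> 3"
  shows "\<not> (\<exists>D. is_DSF X D \<and> pareto_efficiency X D \<and> weak_position_unanimity X D)"
proof -
  have "2 \<le> card X"
    using assms(2) by simp
  then show ?thesis
    using no_pareto_efficient_weakly_position_unanimous_DSF[OF assms(1)] by blast
qed

end
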